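(* Let $0\le N\le M-1$, let $x=(x_1<\dots<x_N)$ and $y=(y_1<\dots<y_{N+1})$ be subsets of $\{1,\dots,M\}$, and likewise $\overline{x}=(\overline{x_1}<\dots<\overline{x_N})$, $\overline{y}=(\overline{y_1}<\dots<\overline{y_{N+1}})$. Then \begin{align*} \langle y_1\cdots y_{N+1}|B(u)|x_1\cdots x_N\rangle&=G_{y,x}(u),& \langle\overline{x_1}\cdots\overline{x_N}|B(u)|\overline{y_1}\cdots\overline{y_{N+1}}\rangle&=H_{\overline{y},\overline{x}}(u),\\ \langle x_1\cdots x_N|C(u)|y_1\cdots y_{N+1}\rangle&=\overline{G}_{y,x}(u),& \langle\overline{y_1}\cdots\overline{y_{N+1}}|C(u)|\overline{x_1}\cdots\overline{x_N}\rangle&=\overline{H}_{\overline{y},\overline{x}}(u). \end{align*}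
   Context: Fix complex parameters $t,a,b,c,d,e,f$, all nonzero, with $t\neq1$, satisfying $cd+af=0$ and $tcd+be=0$. The $L$-operator $L_{aj}(u)$ on $W_a\otimes V_j$ ($\cong\mathbb{C}^2\otimes\mathbb{C}^2$, basis $|0\rangle,|1\rangle$) has matrix elements $[L(u)]^{\gamma\delta}_{\alpha\beta}={}_a\langle\gamma|{}_j\langle\delta|L_{aj}(u)|\alpha\rangle_a|\beta\rangle_j$: $[L]^{00}_{00}=au+b$, $[L]^{01}_{01}=atu+b$, $[L]^{01}_{10}=(1-t)cu$, $[L]^{10}_{01}=(1-t)d$, $[L]^{10}_{10}=eu+f$, $[L]^{11}_{11}=eu+tf$, all others $0$. Monodromy $T_a(u)=L_{aM}(u)\cdots L_{a1}(u)$, $B(u)={}_a\langle0|T_a(u)|1\rangle_a$, $C(u)={}_a\langle1|T_a(u)|0\rangle_a$, acting on $V_1\otimes\cdots\otimes V_M$. $|x_1\cdots x_N\rangle$ is the basis tensor with $|1\rangle$ at sites $x_j$ and $|0\rangle$ elsewhere; $|\overline{x_1}\cdots\overline{x_N}\rangle$ is the basis tensor with $|0\rangle$ at sites $\overline{x_j}$ and $|1\rangle$ elsewhere; bras are duals. For strictly increasing $y=(y_1<\dots<y_{N+1})$, $x=(x_1<\dots<x_N)$ write $y\succ x$ if $y_1\le x_1\le y_2\le x_2\le\cdots\le x_N\le y_{N+1}$. For $y\succ x$, let $p_1<\dots<p_{k+1}$ be the $y_j$ ($1\le j\le N+1$) with $y_j\notin\{x_j,x_{j-1}\}$ (ignoring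 undefined $x_0,x_{N+1}$), let $q_1<\dots<q_k$ be the $x_j$ with $x_j\notin\{y_j,y_{j+1}\}$, and set $q_0=0$, $q_{k+1}=M+1$. For integers $\alpha<\beta$ put $n_x(\alpha,\beta)=\#\{\ell:\alpha<x_\ell<\beta\}$. Define $G_{y,x}(u)=((1-t)cu)^{k+1}((1-t)d)^k\prod_{j=1}^{k+1}(atu+b)^{n_x(p_j,q_j)}(au+b)^{q_j-p_j-1-n_x(p_j,q_j)}(eu+tf)^{n_x(q_{j-1},p_j)}(eu+f)^{p_j-q_{j-1}-1-n_x(q_{j-1},p_j)}$, $\overline{G}_{y,x}(u)=((1-t)d)^{k+1}((1-t)cu)^k\prod_{j=1}^{k+1}(eu+tf)^{n_x(p_j,q_j)}(eu+f)^{q_j-p_j-1-n_x(p_j,q_j)}(atu+b)^{n_x(q_{j-1},p_j)}(au+b)^{p_j-q_{j-1}-1-n_x(q_{j-1},p_j)}$, and $G_{y,x}(u)=\overline{G}_{y,x}(u)=0$ if not $y\succ x$. For hole sequences $\overline{y},\overline{x}$, with $\overline{y}\succ\overline{x}$, $\overline{p_j},\overline{q_j}$ and $n_{\overline{x}}$ defined in the same way from $\overline{y},\overline{x}$ ($\overline{q_0}=0$, $\overline{q_{k+1}}=M+1$), define $H_{\overline{y},\overline{x}}(u)=((1-t)cu)^{k+1}((1-t)d)^k\prod_{j=1}^{k+1}(au+b)^{n_{\overline{x}}(\overline{p_j},\overline{q_j})}(atu+b)^{\overline{q_j}-\overline{p_j}-1-n_{\overline{x}}(\overline{p_j},\overline{q_j})}(eu+f)^{n_{\overline{x}}(\overline{q_{j-1}},\overline{p_j})}(eu+tf)^{\overline{p_j}-\overline{q_{j-1}}-1-n_{\overline{x}}(\overline{q_{j-1}},\overline{p_j})}$,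 $\overline{H}_{\overline{y},\overline{x}}(u)=((1-t)d)^{k+1}((1-t)cu)^k\prod_{j=1}^{k+1}(eu+f)^{n_{\overline{x}}(\overline{p_j},\overline{q_j})}(eu+tf)^{\overline{q_j}-\overline{p_j}-1-n_{\overline{x}}(\overline{p_j},\overline{q_j})}(au+b)^{n_{\overline{x}}(\overline{q_{j-1}},\overline{p_j})}(atu+b)^{\overline{p_j}-\overline{q_{j-1}}-1-n_{\overline{x}}(\overline{q_{j-1}},\overline{p_j})}$, and both are $0$ if not $\overline{y}\succ\overline{x}$. *)

theory Defs
  imports Complex_Main
begin

text \<open>Local states: False = |0>, True = |1>.
  Lent t a b c d e f u g dl al be is the matrix element
  [L(u)]^{g dl}_{al be} = <g|_a <dl|_j L_{aj}(u) |al>_a |be>_j.\<close>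
definition Lent :: "complex \<Rightarrow> complex \<Rightarrow> complex \<Rightarrow> complex \<Rightarrow> complex \<Rightarrow> complex \<Rightarrow> complex
    \<Rightarrow> complex \<Rightarrow> bool \<Rightarrow> bool \<Rightarrow> bool \<Rightarrow> bool \<Rightarrow> complex" where
  "Lent t a b c d e f u g dl al be =
    (if \<not> al \<and> \<not> be \<and> \<not> g \<and> \<not> dl then a*u + b
     else if \<not> al \<and> be \<and> \<not> g \<and> dl then a*t*u + b
     else if al \<and> \<not> be \<and> \<not> g \<and> dl then (1 - t)*c*u
     else if \<not> al \<and> be \<and> g \<and> \<not> dl then (1 - t)*d
     else if al \<and> \<not> be \<and> g \<and> \<not> dl then e*u + f
     else if al \<and> be \<and> g \<and> dl then e*u + t*f
     else 0)"

text \<open>Basis states of V_1 x ... x V_M are encoded by the set of sites carrying |1>.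
  Tpart ... k out inn g al = <out| <g|_a L_{ak}(u) ... L_{a1}(u) |al>_a |inn>,
  restricted to sites 1..k (the matrix element factorises site by site).\<close>
fun Tpart :: "complex \<Rightarrow> complex \<Rightarrow> complex \<Rightarrow> complex \<Rightarrow> complex \<Rightarrow> complex \<Rightarrow> complex
    \<Rightarrow> complex \<Rightarrow> nat \<Rightarrow> nat set \<Rightarrow> nat set \<Rightarrow> bool \<Rightarrow> bool \<Rightarrow> complex" where
  "Tpart t a b c d e f u 0 out inn g al = (if g = al then 1 else 0)"
| "Tpart t a b c d e f u (Suc k) out inn g al =
     (\<Sum>s\<in>(UNIV::bool set). Lent t a b c d e f u g (Suc k \<in> out) s (Suc k \<in> inn)
        * Tpart t a b c d e f u k out inn s al)"

text \<open><out|B(u)|inn> and <out|C(u)|inn> for the monodromy T_a(u) = L_{aM}(u)...L_{a1}(u).\<close>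
definition Bel :: "complex \<Rightarrow> complex \<Rightarrow> complex \<Rightarrow> complex \<Rightarrow> complex \<Rightarrow> complex \<Rightarrow> complex
    \<Rightarrow> nat \<Rightarrow> complex \<Rightarrow> nat set \<Rightarrow> nat set \<Rightarrow> complex" where
  "Bel t a b c d e f M u out inn = Tpart t a b c d e f u M out inn False True"

definition Cel :: "complex \<Rightarrow> complex \<Rightarrow> complex \<Rightarrow> complex \<Rightarrow> complex \<Rightarrow> complex \<Rightarrow> complex
    \<Rightarrow> nat \<Rightarrow> complex \<Rightarrow> nat set \<Rightarrow> nat set \<Rightarrow> complex" where
  "Cel t a b c d e f M u out inn = Tpart t a b c d e f u M out inn True False"

text \<open>|x_1...x_N> : particles (|1>) at the x_j; |bar x_1 ... bar x_N> : holes (|0>) at the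
  given sites and |1> at all other sites of {1..M}.\<close>
definition particles :: "nat list \<Rightarrow> nat set" where
  "particles xs = set xs"

definition holes :: "nat \<Rightarrow> nat list \<Rightarrow> nat set" where
  "holes M xs = {1..M} - set xs"

text \<open>Lists are 0-indexed: y!i is y_{i+1}, x!i is x_{i+1}.\<close>
definition interlace :: "nat list \<Rightarrow> nat list \<Rightarrow> bool" where
  "interlace y x \<longleftrightarrow> length y = Suc (length x) \<and>
     (\<forall>i < length x. y!i \<le> x!i \<and> x!i \<le> y!(Suc i))"

definition pseq :: "nat list \<Rightarrow> nat list \<Rightarrow> nat list" where
  "pseq y x = [y!i. i \<leftarrow> [0..<length y],
      \<not> (i < length x \<and> y!i = x!i) \<and> \<not> (1 \<le> i \<and> y!i = x!(i - 1))]"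

definition qseq :: "nat list \<Rightarrow> nat list \<Rightarrow> nat list" where
  "qseq y x = [x!i. i \<leftarrow> [0..<length x], x!i \<noteq> y!i \<and> x!i \<noteq> y!(Suc i)]"

definition ncount :: "nat list \<Rightarrow> nat \<Rightarrow> nat \<Rightarrow> nat" where
  "ncount x al be = card {l. l < length x \<and> al < x!l \<and> x!l < be}"

definition qj :: "nat \<Rightarrow> nat list \<Rightarrow> nat list \<Rightarrow> nat \<Rightarrow> nat" where
  "qj M y x j = (if j = 0 then 0 else if j = Suc (length (qseq y x)) then M + 1
                 else qseq y x ! (j - 1))"

definition pj :: "nat list \<Rightarrow> nat list \<Rightarrow> nat \<Rightarrow> nat" where
  "pj y x j = pseq y x ! (j - 1)"

definition wprod :: "nat \<Rightarrow> nat list \<Rightarrow> nat list \<Rightarrow> complex \<Rightarrow> complex \<Rightarrow> complex \<Rightarrow> complex \<Rightarrow> complex" where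
  "wprod M y x w1 w2 w3 w4 =
    (\<Prod>j\<in>{1..Suc (length (qseq y x))}.
       w1 ^ (ncount x (pj y x j) (qj M y x j))
     * w2 ^ (qj M y x j - pj y x j - 1 - ncount x (pj y x j) (qj M y x j))
     * w3 ^ (ncount x (qj M y x (j - 1)) (pj y x j))
     * w4 ^ (pj y x j - qj M y x (j - 1) - 1 - ncount x (qj M y x (j - 1)) (pj y x j)))"

definition Gf :: "complex \<Rightarrow> complex \<Rightarrow> complex \<Rightarrow> complex \<Rightarrow> complex \<Rightarrow> complex \<Rightarrow> complex
    \<Rightarrow> nat \<Rightarrow> nat list \<Rightarrow> nat list \<Rightarrow> complex \<Rightarrow> complex" where
  "Gf t a b c d e f M y x u = (if interlace y x then
     ((1-t)*c*u) ^ Suc (length (qseq y x)) * ((1-t)*d) ^ length (qseq y x)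
     * wprod M y x (a*t*u+b) (a*u+b) (e*u+t*f) (e*u+f) else 0)"

definition Gbar :: "complex \<Rightarrow> complex \<Rightarrow> complex \<Rightarrow> complex \<Rightarrow> complex \<Rightarrow> complex \<Rightarrow> complex
    \<Rightarrow> nat \<Rightarrow> nat list \<Rightarrow> nat list \<Rightarrow> complex \<Rightarrow> complex" where
  "Gbar t a b c d e f M y x u = (if interlace y x then
     ((1-t)*d) ^ Suc (length (qseq y x)) * ((1-t)*c*u) ^ length (qseq y x)
     * wprod M y x (e*u+t*f) (e*u+f) (a*t*u+b) (a*u+b) else 0)"

definition Hf :: "complex \<Rightarrow> complex \<Rightarrow> complex \<Rightarrow> complex \<Rightarrow> complex \<Rightarrow> complex \<Rightarrow> complex
    \<Rightarrow> nat \<Rightarrow> nat list \<Rightarrow> nat list \<Rightarrow> complex \<Rightarrow> complex" where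
  "Hf t a b c d e f M y x u = (if interlace y x then
     ((1-t)*c*u) ^ Suc (length (qseq y x)) * ((1-t)*d) ^ length (qseq y x)
     * wprod M y x (a*u+b) (a*t*u+b) (e*u+f) (e*u+t*f) else 0)"

definition Hbar :: "complex \<Rightarrow> complex \<Rightarrow> complex \<Rightarrow> complex \<Rightarrow> complex \<Rightarrow> complex \<Rightarrow> complex
    \<Rightarrow> nat \<Rightarrow> nat list \<Rightarrow> nat list \<Rightarrow> complex \<Rightarrow> complex" where
  "Hbar t a b c d e f M y x u = (if interlace y x then
     ((1-t)*d) ^ Suc (length (qseq y x)) * ((1-t)*c*u) ^ length (qseq y x)
     * wprod M y x (e*u+f) (e*u+t*f) (a*u+b) (a*t*u+b) else 0)"

end

theory Submission
  imports Defs
begin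

text \<open>Every nonzero entry of the L-operator conserves the number of |1>s in auxiliary space plus
  site. Between basis states the auxiliary state after site i is therefore forced: it is determined
  by the height #(out \<inter> {1..i}) - #(in \<inter> {1..i}), and a single auxiliary path survives, admissible
  exactly when the height stays in {0, 1}. For sorted site sequences this is the interlacing y \<succ> x.
  Along the path the auxiliary state flips at the p_j (sites of y not in x) and flips back at the q_j
  (sites of x not in y), so the weight factorises over the segments (q_{j-1}, q_j), each consisting
  of a run in one auxiliary state, the flip at p_j, and a run in the other state.
  For holes and for C the same picture holds with the roles of |0> and |1> exchanged, so all four
  identities are instances of one computation.\<close>

section \<open>Monodromy entries of a conserving L-operator\<close>

fun monodromy_entry :: "(nat \<Rightarrow> bool \<Rightarrow> bool \<Rightarrow> complex) \<Rightarrow> nat \<Rightarrow> bool \<Rightarrow> bool \<Rightarrow> complex" where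
  "monodromy_entry w 0 g s = (if g = s then 1 else 0)"
| "monodromy_entry w (Suc k) g s = (\<Sum>r\<in>UNIV. w (Suc k) g r * monodromy_entry w k r s)"

lemma Tpart_eq_monodromy_entry:
  "Tpart t a b c d e f u k out inn g s
   = monodromy_entry (\<lambda>i g r. Lent t a b c d e f u g (i \<in> out) r (i \<in> inn)) k g s"
  by (induction k arbitrary: g) auto

definition height :: "nat set \<Rightarrow> nat set \<Rightarrow> nat \<Rightarrow> int" where
  "height Y X i = int (card (Y \<inter> {1..i})) - int (card (X \<inter> {1..i}))"

lemma height_0 [simp]: "height Y X 0 = 0"
  by (simp add: height_def)

lemma card_Int_atLeastAtMost_Suc:
  "card (A \<inter> {1..Suc i}) = card (A \<inter> {1..i}) + (if Suc i \<in> A then 1 else 0)"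
proof -
  have "A \<inter> {1..Suc i} = (if Suc i \<in> A then insert (Suc i) (A \<inter> {1..i}) else A \<inter> {1..i})"
    by (auto simp: le_Suc_eq)
  then show ?thesis by auto
qed

lemma height_Suc:
  "height Y X (Suc i) = height Y X i + (if Suc i \<in> Y then 1 else 0) - (if Suc i \<in> X then 1 else 0)"
  unfolding height_def card_Int_atLeastAtMost_Suc by auto

lemma height_beyond_support:
  assumes "Y \<subseteq> {1..M}" "X \<subseteq> {1..M}" "M \<le> i"
  shows "height Y X i = int (card Y) - int (card X)"
proof -
  have "Y \<inter> {1..i} = Y" "X \<inter> {1..i} = X" using assms by auto
  then show ?thesis by (simp add: height_def)
qed

lemma mem_iff_mem_if_height_Suc_eq:
  "height Y X (Suc i) = height Y X i \<Longrightarrow> Suc i \<in> Y \<longleftrightarrow> Suc i \<in> X"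
  by (auto simp: height_Suc split: if_splits)

context
  fixes Y X :: "nat set" and v0 :: bool and cP cQ a1 a2 b1 b2 :: complex
begin

text \<open>One weight table for all four matrix elements: the path leaves the auxiliary state v0 at the
  sites of Y - X and returns at those of X - Y. In each case Y is the (N+1)-site sequence y or yb,
  X the N-site one, and v0 is |1> for B and |0> for C.\<close>
definition conserving_weight :: "nat \<Rightarrow> bool \<Rightarrow> bool \<Rightarrow> complex" where
  "conserving_weight i g s =
    (if i \<in> Y \<and> i \<notin> X then (if s = v0 \<and> g = (\<not> v0) then cP else 0)
     else if i \<in> X \<and> i \<notin> Y then (if s = (\<not> v0) \<and> g = v0 then cQ else 0)
     else if g \<noteq> s then 0
     else if s = v0 then (if i \<in> X then b1 else b2)
     else (if i \<in> X then a1 else a2))"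

definition aux_state :: "nat \<Rightarrow> bool" where
  "aux_state i = (if height Y X i = 0 then v0 else \<not> v0)"

definition path_weight :: "nat \<Rightarrow> complex" where
  "path_weight i = conserving_weight i (aux_state i) (aux_state (i - 1))"

lemma conserving_weight_step:
  assumes "height Y X k \<in> {0, 1}"
  shows "conserving_weight (Suc k) g (aux_state k)
    = (if height Y X (Suc k) \<in> {0, 1} \<and> g = aux_state (Suc k) then path_weight (Suc k) else 0)"
  using assms unfolding path_weight_def conserving_weight_def aux_state_def height_Suc[of Y X k]
  by auto

lemma monodromy_entry_conserving:
  assumes w: "\<And>i g s. i \<in> {1..M} \<Longrightarrow> w i g s = conserving_weight i g s"
  shows "k \<le> M \<Longrightarrow> monodromy_entry w k g v0 =
    (if (\<forall>i\<le>k. height Y X i \<in> {0, 1}) \<and> g = aux_state k then \<Prod>i\<in>{1..k}. path_weight i else 0)"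
proof (induction k arbitrary: g)
  case 0
  then show ?case by (simp add: aux_state_def)
next
  case (Suc k)
  let ?ok = "\<lambda>k. \<forall>i\<le>k. height Y X i \<in> {0, 1}"
  have "monodromy_entry w (Suc k) g v0 =
    (\<Sum>r\<in>UNIV. conserving_weight (Suc k) g r
       * (if ?ok k \<and> r = aux_state k then \<Prod>i\<in>{1..k}. path_weight i else 0))"
    using Suc by (simp add: w)
  also have "\<dots> = (if ?ok k then conserving_weight (Suc k) g (aux_state k) * (\<Prod>i\<in>{1..k}. path_weight i) else 0)"
    by (cases "aux_state k") (auto simp: UNIV_bool)
  also have "\<dots> = (if ?ok (Suc k) \<and> g = aux_state (Suc k) then \<Prod>i\<in>{1..Suc k}. path_weight i else 0)"
    using conserving_weight_step[of k g] by (auto simp: le_Suc_eq mult.commute)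
  finally show ?case .
qed

end

section \<open>Interlacing sequences and their height function\<close>

lemma card_sorted_prefix_ge:
  fixes l :: "nat list"
  assumes s: "sorted_wrt (<) l" and pos: "0 \<notin> set l" and m: "m < length l" and le: "l!m \<le> i"
  shows "Suc m \<le> card (set l \<inter> {1..i})"
proof -
  have "(\<lambda>j. l!j) ` {..m} \<subseteq> set l \<inter> {1..i}"
  proof
    fix v assume "v \<in> (\<lambda>j. l!j) ` {..m}"
    then obtain j where j: "j \<le> m" "v = l!j" by auto
    then have "l!j \<le> l!m" using s m sorted_nth_mono[of l j m] by (simp add: strict_sorted_iff)
    moreover have "0 < l!j" using j m pos by (metis gr0I le_less_trans nth_mem)
    ultimately show "v \<in> set l \<inter> {1..i}" using j m le by auto
  qed
  moreover have "inj_on (\<lambda>j. l!j) {..m}"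
    using s m by (auto simp: inj_on_def strict_sorted_iff nth_eq_iff_index_eq)
  ultimately show ?thesis
    by (metis card_atMost card_image card_mono finite_Int finite_set)
qed

lemma card_sorted_prefix_le:
  fixes l :: "nat list"
  assumes s: "sorted_wrt (<) l" and m: "m \<le> length l" and less: "m < length l \<Longrightarrow> i < l!m"
  shows "card (set l \<inter> {1..i}) \<le> m"
proof -
  have "set l \<inter> {1..i} \<subseteq> (\<lambda>j. l!j) ` {..<m}"
  proof
    fix v assume v: "v \<in> set l \<inter> {1..i}"
    then obtain j where j: "j < length l" "v = l!j" by (auto simp: in_set_conv_nth)
    have "j < m"
    proof (rule ccontr)
      assume "\<not> j < m"
      then have "m < length l" "l!m \<le> l!j"
        using j m s sorted_nth_mono[of l m j] by (auto simp: strict_sorted_iff)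
      then show False using less v j by auto
    qed
    then show "v \<in> (\<lambda>j. l!j) ` {..<m}" using j by auto
  qed
  then show ?thesis
    by (metis card_image_le card_lessThan card_mono finite_imageI finite_lessThan le_trans)
qed

lemma card_sorted_prefix_eq:
  fixes l :: "nat list"
  assumes s: "sorted_wrt (<) l" and pos: "0 \<notin> set l" and m: "m \<le> length l"
    and lo: "\<And>m'. m = Suc m' \<Longrightarrow> l!m' \<le> i" and hi: "m < length l \<Longrightarrow> i < l!m"
  shows "card (set l \<inter> {1..i}) = m"
proof -
  have "m \<le> card (set l \<inter> {1..i})"
    using card_sorted_prefix_ge[OF s pos, of "m - 1" i] lo m by (cases m) auto
  then show ?thesis using card_sorted_prefix_le[OF s m hi] by simp
qed

lemma height_mem_01_if_interlace:
  fixes x y :: "nat list"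
  assumes sy: "sorted_wrt (<) y" and sx: "sorted_wrt (<) x"
    and py: "0 \<notin> set y" and px: "0 \<notin> set x" and il: "interlace y x"
  shows "height (set y) (set x) i \<in> {0, 1}"
proof -
  have ly: "length y = Suc (length x)" and il2: "\<And>j. j < length x \<Longrightarrow> y!j \<le> x!j \<and> x!j \<le> y!Suc j"
    using il by (auto simp: interlace_def)
  define m where "m = card (set y \<inter> {1..i})"
  have m_le: "m \<le> length y"
    unfolding m_def using card_sorted_prefix_le[OF sy, of "length y"] by simp
  have i_less: "i < y!m" if "m < length y"
    using card_sorted_prefix_ge[OF sy py that, of i] m_def by (cases "y!m \<le> i") auto
  have le_i: "y!m' \<le> i" if "m = Suc m'" for m'
    using card_sorted_prefix_le[OF sy, of m' i] that m_le m_def by (cases "y!m' \<le> i") auto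
  have "card (set x \<inter> {1..i}) \<le> m"
  proof (cases "m < length x")
    case True
    then have "i < x!m" using i_less il2[of m] ly by force
    then show ?thesis using card_sorted_prefix_le[OF sx, of m i] True by simp
  next
    case False
    then show ?thesis using card_sorted_prefix_le[OF sx, of "length x" i] by simp
  qed
  moreover have "m \<le> Suc (card (set x \<inter> {1..i}))"
  proof (cases "m \<ge> 2")
    case True
    then obtain m' where m': "m = Suc (Suc m')" by (metis add_2_eq_Suc le_Suc_ex)
    then have "m' < length x" using m_le ly by simp
    moreover have "x!m' \<le> i" using il2[of m'] le_i[of "Suc m'"] m' \<open>m' < length x\<close> by force
    ultimately show ?thesis using card_sorted_prefix_ge[OF sx px] m' by simp
  qed simp
  ultimately show ?thesis unfolding height_def m_def by auto
qed

lemma interlace_if_height_mem_01: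
  fixes x y :: "nat list"
  assumes sy: "sorted_wrt (<) y" and sx: "sorted_wrt (<) x"
    and py: "0 \<notin> set y" and px: "0 \<notin> set x" and ly: "length y = Suc (length x)"
    and h: "\<And>i. height (set y) (set x) i \<in> {0, 1}"
  shows "interlace y x"
  unfolding interlace_def
proof (intro conjI[OF ly] allI impI)
  fix j assume j: "j < length x"
  show "y!j \<le> x!j \<and> x!j \<le> y!Suc j"
  proof (rule ccontr)
    assume "\<not> ?thesis"
    then consider "x!j < y!j" | "y!Suc j < x!j" by linarith
    then show False
    proof cases
      case 1
      have "Suc j \<le> card (set x \<inter> {1..x!j})" using card_sorted_prefix_ge[OF sx px j] by simp
      moreover have "card (set y \<inter> {1..x!j}) \<le> j" using card_sorted_prefix_le[OF sy, of j "x!j"] 1 ly j by simp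
      ultimately show False using h[of "x!j"] by (auto simp: height_def)
    next
      case 2
      have "Suc (Suc j) \<le> card (set y \<inter> {1..y!Suc j})" using card_sorted_prefix_ge[OF sy py, of "Suc j"] ly j by simp
      moreover have "card (set x \<inter> {1..y!Suc j}) \<le> j" using card_sorted_prefix_le[OF sx, of j "y!Suc j"] 2 j by simp
      ultimately show False using h[of "y!Suc j"] by (auto simp: height_def)
    qed
  qed
qed

section \<open>The weight of the surviving auxiliary path\<close>

lemma ncount_eq_card: "distinct x \<Longrightarrow> ncount x l r = card (set x \<inter> {l<..<r})"
  unfolding ncount_def
  by (rule bij_betw_same_card[of "\<lambda>i. x!i"])
     (auto simp: bij_betw_def inj_on_def nth_eq_iff_index_eq in_set_conv_nth)

lemma prod_greaterThanLessThan_if_mem: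
  fixes h :: "nat \<Rightarrow> 'a::comm_monoid_mult"
  assumes "distinct x" and h: "\<And>i. l < i \<Longrightarrow> i < r \<Longrightarrow> h i = (if i \<in> set x then w1 else w2)"
  shows "(\<Prod>i\<in>{l<..<r}. h i) = w1 ^ ncount x l r * w2 ^ (r - l - 1 - ncount x l r)"
proof -
  have "(\<Prod>i\<in>{l<..<r}. h i) = (\<Prod>i\<in>{l<..<r}. if i \<in> set x then w1 else w2)"
    by (rule prod.cong) (auto simp: h)
  also have "\<dots> = w1 ^ card ({l<..<r} \<inter> set x) * w2 ^ card ({l<..<r} - set x)"
    by (simp add: prod.If_cases Diff_eq)
  also have "card ({l<..<r} - set x) = r - l - 1 - card ({l<..<r} \<inter> set x)"
    using card_Int_Diff[of "{l<..<r}" "set x"] by simp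
  finally show ?thesis using ncount_eq_card[OF assms(1)] by (simp add: Int_commute)
qed

lemma prod_greaterThanLessThan_split:
  fixes h :: "nat \<Rightarrow> 'a::comm_monoid_mult"
  assumes "l < m" "m < r"
  shows "(\<Prod>i\<in>{l<..<r}. h i) = (\<Prod>i\<in>{l<..<m}. h i) * h m * (\<Prod>i\<in>{m<..<r}. h i)"
proof -
  have "{l<..<r} = {l<..<m} \<union> ({m} \<union> {m<..<r})" using assms by auto
  then show ?thesis by (simp add: prod.union_disjoint mult_ac)
qed

lemma concat_map_if_singleton:
  "concat (map (\<lambda>i. if P i then [f i] else []) xs) = map f (filter P xs)"
  by (induction xs) auto

lemma sorted_wrt_map_nth_filter:
  fixes l :: "nat list"
  assumes "sorted_wrt (<) l" "\<forall>i\<in>set is. i < length l" "sorted_wrt (<) is"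
  shows "sorted_wrt (<) (map (\<lambda>i. l!i) (filter P is))"
  using assms sorted_wrt_filter[OF assms(3)]
  by (auto simp: sorted_wrt_map sorted_wrt_nth_less intro: sorted_wrt_mono_rel[of _ "(<)"])

locale interlacing_pair =
  fixes M :: nat and y x :: "nat list"
  assumes sorted_y: "sorted_wrt (<) y" and sorted_x: "sorted_wrt (<) x"
    and y_range: "set y \<subseteq> {1..M}" and x_range: "set x \<subseteq> {1..M}"
    and interlace: "interlace y x"
begin

abbreviation "p \<equiv> pseq y x"
abbreviation "q \<equiv> qseq y x"
abbreviation "k \<equiv> length q"

lemma length_y: "length y = Suc (length x)"
  using interlace by (simp add: interlace_def)

lemma interlace_nth: "j < length x \<Longrightarrow> y!j \<le> x!j \<and> x!j \<le> y!Suc j"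
  using interlace by (simp add: interlace_def)

lemma pseq_eq: "p = map (\<lambda>i. y!i)
    (filter (\<lambda>i. \<not> (i < length x \<and> y!i = x!i) \<and> \<not> (1 \<le> i \<and> y!i = x!(i - 1))) [0..<length y])"
  unfolding pseq_def concat_map_if_singleton ..

lemma qseq_eq: "q = map (\<lambda>i. x!i) (filter (\<lambda>i. x!i \<noteq> y!i \<and> x!i \<noteq> y!Suc i) [0..<length x])"
  unfolding qseq_def concat_map_if_singleton ..

lemma sorted_p: "sorted_wrt (<) p"
  unfolding pseq_eq by (rule sorted_wrt_map_nth_filter) (use sorted_y in auto)

lemma sorted_q: "sorted_wrt (<) q"
  unfolding qseq_eq by (rule sorted_wrt_map_nth_filter) (use sorted_x in auto)

lemma set_p: "set p = set y - set x"
proof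
  show "set p \<subseteq> set y - set x"
  proof
    fix v assume "v \<in> set p"
    then obtain i where i: "i < length y" "v = y!i"
      and not_left: "\<not> (i < length x \<and> y!i = x!i)" and not_right: "\<not> (1 \<le> i \<and> y!i = x!(i - 1))"
      unfolding pseq_eq by auto
    have "v \<notin> set x"
    proof
      assume "v \<in> set x"
      then obtain l where l: "l < length x" "v = x!l" by (auto simp: in_set_conv_nth)
      consider "Suc l < i" | "Suc l = i" | "l = i" | "i < l" by linarith
      then show False
      proof cases
        case 1
        then have "y!Suc l < y!i" using sorted_wrt_nth_less[OF sorted_y] i by simp
        then show ?thesis using interlace_nth[OF l(1)] i l by simp
      next
        case 4
        then have "x!i < x!l" using sorted_wrt_nth_less[OF sorted_x] l by simp
        then show ?thesis using interlace_nth[of i] 4 l i by simp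
      qed (use not_left not_right i l in auto)
    qed
    then show "v \<in> set y - set x" using i by simp
  qed
next
  show "set y - set x \<subseteq> set p"
  proof
    fix v assume v: "v \<in> set y - set x"
    then obtain i where i: "i < length y" "v = y!i" by (auto simp: in_set_conv_nth)
    have "i - 1 < length x" if "1 \<le> i" using that i length_y by linarith
    then show "v \<in> set p" unfolding pseq_eq using v i by force
  qed
qed

lemma set_q: "set q = set x - set y"
proof
  show "set q \<subseteq> set x - set y"
  proof
    fix v assume "v \<in> set q"
    then obtain i where i: "i < length x" "v = x!i" and ne: "x!i \<noteq> y!i" "x!i \<noteq> y!Suc i"
      unfolding qseq_eq by auto
    have "v \<notin> set y"
    proof
      assume "v \<in> set y"
      then obtain l where l: "l < length y" "v = y!l" by (auto simp: in_set_conv_nth)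
      consider "l < i" | "l = i" | "l = Suc i" | "Suc i < l" by linarith
      then show False
      proof cases
        case 1
        then have "y!l < y!i" using sorted_wrt_nth_less[OF sorted_y] i length_y by simp
        then show ?thesis using interlace_nth[OF i(1)] i l by simp
      next
        case 4
        then have "y!Suc i < y!l" using sorted_wrt_nth_less[OF sorted_y] l by simp
        then show ?thesis using interlace_nth[OF i(1)] i l by simp
      qed (use ne i l in auto)
    qed
    then show "v \<in> set x - set y" using i by simp
  qed
next
  show "set x - set y \<subseteq> set q"
  proof
    fix v assume v: "v \<in> set x - set y"
    then obtain i where i: "i < length x" "v = x!i" by (auto simp: in_set_conv_nth)
    then have "x!i \<noteq> y!i" "x!i \<noteq> y!Suc i" using v length_y by auto
    then show "v \<in> set q" unfolding qseq_eq using i by auto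
  qed
qed

lemma length_p: "length p = Suc k"
proof -
  have "card (set y) = Suc (card (set x))"
    using length_y sorted_x sorted_y by (simp add: strict_sorted_iff distinct_card)
  moreover have "card (set y) = card (set y \<inter> set x) + card (set y - set x)"
    "card (set x) = card (set x \<inter> set y) + card (set x - set y)"
    by (simp_all add: card_Int_Diff)
  moreover have "length p = card (set p)" "length q = card (set q)"
    using sorted_p sorted_q by (simp_all add: strict_sorted_iff distinct_card)
  ultimately show ?thesis using set_p set_q by (simp add: Int_commute)
qed

lemma p_range: "set p \<subseteq> {1..M}" and q_range: "set q \<subseteq> {1..M}"
  using set_p set_q y_range x_range by auto

lemma zero_notin: "0 \<notin> set y" "0 \<notin> set x" "0 \<notin> set p" "0 \<notin> set q"
  using y_range x_range p_range q_range by auto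

lemma height_eq_height_pq: "height (set y) (set x) i = height (set p) (set q) i"
proof -
  have "set p \<inter> {1..i} = set y \<inter> {1..i} - set x" "set q \<inter> {1..i} = set x \<inter> {1..i} - set y"
    "set x \<inter> {1..i} \<inter> set y = set y \<inter> {1..i} \<inter> set x"
    using set_p set_q by auto
  then show ?thesis
    using card_Int_Diff[of "set y \<inter> {1..i}" "set x"] card_Int_Diff[of "set x \<inter> {1..i}" "set y"]
    by (simp add: height_def)
qed

lemma height_mem_01: "height (set y) (set x) i \<in> {0, 1}"
  using height_mem_01_if_interlace[OF sorted_y sorted_x zero_notin(1,2) interlace] .

text \<open>The sites where the auxiliary state flips have the same height function, hence interlace as well;
  being disjoint, they interlace strictly.\<close>
lemma interlace_pq: "interlace p q"
  using sorted_p sorted_q zero_notin(3,4) length_p height_mem_01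
  by (intro interlace_if_height_mem_01) (simp_all add: height_eq_height_pq)

lemma p_less_q: "j < k \<Longrightarrow> p!j < q!j"
  using interlace_pq set_p set_q length_p
  by (metis interlace_def DiffD2 DiffE le_neq_implies_less less_SucI nth_mem)

lemma q_less_p: "j < k \<Longrightarrow> q!j < p!Suc j"
  using interlace_pq set_p set_q length_p
  by (metis interlace_def DiffD2 DiffE Suc_mono le_neq_implies_less nth_mem)

text \<open>Segment j \<le> k (counted from 0) is the interval from qj j to qj (Suc j) around pj (Suc j):
  pj and qj are 1-based, with the sentinels q_0 = 0 and q_{k+1} = M + 1.\<close>
lemma qj_0: "qj M y x 0 = 0"
  and qj_Suc: "j < k \<Longrightarrow> qj M y x (Suc j) = q!j"
  and qj_last: "qj M y x (Suc k) = M + 1"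
  and pj_Suc: "pj y x (Suc j) = p!j"
  by (simp_all add: qj_def pj_def)

lemma p_nth_range: "j \<le> k \<Longrightarrow> p!j \<in> {1..M}"
  using p_range length_p by (simp add: subset_iff)

lemma qj_less_pj: "j \<le> k \<Longrightarrow> qj M y x j < pj y x (Suc j)"
  using q_less_p[of "j - 1"] p_nth_range[of 0]
  by (cases j) (auto simp: qj_0 qj_Suc pj_Suc)

lemma pj_less_qj: "j \<le> k \<Longrightarrow> pj y x (Suc j) < qj M y x (Suc j)"
  using p_less_q[of j] p_nth_range[of j]
  by (cases "j = k") (auto simp: qj_Suc qj_last pj_Suc)

lemma height_gap:
  assumes j: "j \<le> k" and i: "qj M y x j \<le> i" "i < pj y x (Suc j)"
  shows "height (set y) (set x) i = 0"
proof -
  have "card (set p \<inter> {1..i}) = j"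
  proof (rule card_sorted_prefix_eq[OF sorted_p zero_notin(3)])
    show "p!j' \<le> i" if "j = Suc j'" for j'
      using p_less_q[of j'] i j that by (simp add: qj_Suc)
  qed (use j i length_p in \<open>simp_all add: pj_Suc\<close>)
  moreover have "card (set q \<inter> {1..i}) = j"
  proof (rule card_sorted_prefix_eq[OF sorted_q zero_notin(4) j])
    show "q!j' \<le> i" if "j = Suc j'" for j'
      using i j that by (simp add: qj_Suc)
    show "i < q!j" if "j < k"
      using p_less_q[OF that] i by (simp add: pj_Suc)
  qed
  ultimately show ?thesis using height_eq_height_pq[of i] by (simp add: height_def)
qed

lemma height_run:
  assumes j: "j \<le> k" and i: "pj y x (Suc j) \<le> i" "i < qj M y x (Suc j)"
  shows "height (set y) (set x) i = 1"
proof -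
  have "card (set p \<inter> {1..i}) = Suc j"
  proof (rule card_sorted_prefix_eq[OF sorted_p zero_notin(3)])
    show "i < p!Suc j" if "Suc j < length p"
      using q_less_p[of j] i that length_p by (simp add: qj_Suc)
  qed (use j i length_p in \<open>simp_all add: pj_Suc\<close>)
  moreover have "card (set q \<inter> {1..i}) = j"
  proof (rule card_sorted_prefix_eq[OF sorted_q zero_notin(4) j])
    show "q!j' \<le> i" if "j = Suc j'" for j'
      using q_less_p[of j'] i j that by (simp add: pj_Suc)
    show "i < q!j" if "j < k"
      using i that by (simp add: qj_Suc)
  qed
  ultimately show ?thesis using height_eq_height_pq[of i] by (simp add: height_def)
qed

context
  fixes v0 :: bool and cP cQ a1 a2 b1 b2 :: complex
begin

abbreviation w where "w \<equiv> path_weight (set y) (set x) v0 cP cQ a1 a2 b1 b2"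

lemma path_weight_gap:
  assumes j: "j \<le> k" and i: "qj M y x j < i" "i < pj y x (Suc j)"
  shows "w i = (if i \<in> set x then b1 else b2)"
proof -
  obtain i' where i': "i = Suc i'" using i by (cases i) auto
  have "height (set y) (set x) i = 0" "height (set y) (set x) i' = 0"
    using height_gap[OF j] i i' by auto
  then show ?thesis
    using mem_iff_mem_if_height_Suc_eq[of "set y" "set x" i'] i'
    by (auto simp: path_weight_def conserving_weight_def aux_state_def)
qed

lemma path_weight_run:
  assumes j: "j \<le> k" and i: "pj y x (Suc j) < i" "i < qj M y x (Suc j)"
  shows "w i = (if i \<in> set x then a1 else a2)"
proof -
  obtain i' where i': "i = Suc i'" using i by (cases i) auto
  have "height (set y) (set x) i = 1" "height (set y) (set x) i' = 1"
    using height_run[OF j] i i' by auto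
  then show ?thesis
    using mem_iff_mem_if_height_Suc_eq[of "set y" "set x" i'] i'
    by (auto simp: path_weight_def conserving_weight_def aux_state_def)
qed

lemma path_weight_pj:
  assumes j: "j \<le> k"
  shows "w (pj y x (Suc j)) = cP"
proof -
  have "height (set y) (set x) (pj y x (Suc j)) = 1"
    using height_run[OF j] pj_less_qj[OF j] by simp
  moreover have "height (set y) (set x) (pj y x (Suc j) - 1) = 0"
    using height_gap[OF j] qj_less_pj[OF j] by simp
  moreover have "pj y x (Suc j) \<in> set y - set x"
    using set_p length_p j nth_mem[of j p] by (simp add: pj_Suc)
  ultimately show ?thesis by (auto simp: path_weight_def conserving_weight_def aux_state_def)
qed

lemma path_weight_qj:
  assumes j: "j < k"
  shows "w (qj M y x (Suc j)) = cQ"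
proof -
  have "height (set y) (set x) (qj M y x (Suc j)) = 0"
    using height_gap[of "Suc j"] qj_less_pj[of "Suc j"] j by simp
  moreover have "height (set y) (set x) (qj M y x (Suc j) - 1) = 1"
    using height_run[of j] pj_less_qj[of j] j by simp
  moreover have "qj M y x (Suc j) \<in> set x - set y"
    using set_q j nth_mem[of j q] by (simp add: qj_Suc)
  ultimately show ?thesis by (auto simp: path_weight_def conserving_weight_def aux_state_def)
qed

definition segment_weight :: "nat \<Rightarrow> complex" where
  "segment_weight j =
       a1 ^ (ncount x (pj y x j) (qj M y x j))
     * a2 ^ (qj M y x j - pj y x j - 1 - ncount x (pj y x j) (qj M y x j))
     * b1 ^ (ncount x (qj M y x (j - 1)) (pj y x j))
     * b2 ^ (pj y x j - qj M y x (j - 1) - 1 - ncount x (qj M y x (j - 1)) (pj y x j))"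

lemma prod_path_weight_segment:
  assumes j: "j \<le> k"
  shows "(\<Prod>i\<in>{qj M y x j<..<qj M y x (Suc j)}. w i) = cP * segment_weight (Suc j)"
proof -
  have distinct_x: "distinct x" using sorted_x by (simp add: strict_sorted_iff)
  have "(\<Prod>i\<in>{qj M y x j<..<qj M y x (Suc j)}. w i)
      = (\<Prod>i\<in>{qj M y x j<..<pj y x (Suc j)}. w i) * w (pj y x (Suc j))
        * (\<Prod>i\<in>{pj y x (Suc j)<..<qj M y x (Suc j)}. w i)"
    by (rule prod_greaterThanLessThan_split[OF qj_less_pj[OF j] pj_less_qj[OF j]])
  also have "\<dots> = cP * segment_weight (Suc j)"
    using path_weight_gap[OF j] path_weight_run[OF j] path_weight_pj[OF j]
    by (simp add: prod_greaterThanLessThan_if_mem[OF distinct_x] segment_weight_def mult_ac)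
  finally show ?thesis .
qed

lemma prod_path_weight_upto:
  "j \<le> k \<Longrightarrow> (\<Prod>i\<in>{0<..<qj M y x (Suc j)}. w i)
     = cP ^ Suc j * cQ ^ j * (\<Prod>j'\<in>{1..Suc j}. segment_weight j')"
proof (induction j)
  case 0
  then show ?case using prod_path_weight_segment[of 0] by (simp add: qj_0)
next
  case (Suc j)
  have "q!j \<in> set q" using Suc.prems by simp
  then have "0 < q!j" using zero_notin(4) by (metis gr0I)
  then have "0 < qj M y x (Suc j)" using Suc.prems by (simp add: qj_Suc)
  moreover have "qj M y x (Suc j) < qj M y x (Suc (Suc j))"
    using qj_less_pj[of "Suc j"] pj_less_qj[of "Suc j"] Suc.prems by simp
  ultimately have "(\<Prod>i\<in>{0<..<qj M y x (Suc (Suc j))}. w i)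
      = (\<Prod>i\<in>{0<..<qj M y x (Suc j)}. w i) * w (qj M y x (Suc j))
        * (\<Prod>i\<in>{qj M y x (Suc j)<..<qj M y x (Suc (Suc j))}. w i)"
    by (rule prod_greaterThanLessThan_split)
  then show ?case
    using Suc path_weight_qj[of j] prod_path_weight_segment[of "Suc j"]
    by (simp add: prod.cl_ivl_Suc mult_ac)
qed

lemma prod_path_weight:
  "(\<Prod>i\<in>{1..M}. w i) = cP ^ Suc k * cQ ^ k * wprod M y x a1 a2 b1 b2"
proof -
  have "{1..M} = {0<..<qj M y x (Suc k)}" by (auto simp: qj_last)
  moreover have "wprod M y x a1 a2 b1 b2 = (\<Prod>j\<in>{1..Suc k}. segment_weight j)"
    by (simp add: wprod_def segment_weight_def)
  ultimately show ?thesis using prod_path_weight_upto[of k] by simp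
qed

end

end

lemma monodromy_entry_eq_interlace:
  fixes x y :: "nat list"
  assumes w: "\<And>i g s. i \<in> {1..M} \<Longrightarrow> w i g s = conserving_weight (set y) (set x) v0 cP cQ a1 a2 b1 b2 i g s"
    and g: "g \<noteq> v0"
    and sorted_y: "sorted_wrt (<) y" and sorted_x: "sorted_wrt (<) x"
    and y_range: "set y \<subseteq> {1..M}" and x_range: "set x \<subseteq> {1..M}"
    and length_y: "length y = Suc (length x)"
  shows "monodromy_entry w M g v0 = (if interlace y x
      then cP ^ Suc (length (qseq y x)) * cQ ^ length (qseq y x) * wprod M y x a1 a2 b1 b2 else 0)"
proof -
  let ?h = "height (set y) (set x)"
  have "?h i = 1" if "M \<le> i" for i
    using height_beyond_support[OF y_range x_range that] length_y sorted_x sorted_y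
    by (simp add: strict_sorted_iff distinct_card)
  then have aux_M: "g = aux_state (set y) (set x) v0 M" and h_beyond: "\<And>i. M \<le> i \<Longrightarrow> ?h i \<in> {0, 1}"
    using g by (auto simp: aux_state_def)
  have entry: "monodromy_entry w M g v0 = (if \<forall>i\<le>M. ?h i \<in> {0, 1}
      then \<Prod>i\<in>{1..M}. path_weight (set y) (set x) v0 cP cQ a1 a2 b1 b2 i else 0)"
    using monodromy_entry_conserving[OF w order.refl, where g = g] aux_M by simp
  show ?thesis
  proof (cases "interlace y x")
    case True
    then interpret interlacing_pair M y x
      using sorted_y sorted_x y_range x_range by unfold_locales
    show ?thesis using entry height_mem_01 prod_path_weight True by simp
  next
    case False
    have "0 \<notin> set y" "0 \<notin> set x" using y_range x_range by auto
    then have "\<not> (\<forall>i. ?h i \<in> {0, 1})"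
      using False interlace_if_height_mem_01[OF sorted_y sorted_x _ _ length_y] by blast
    then have invalid: "\<not> (\<forall>i\<le>M. ?h i \<in> {0, 1})"
      using h_beyond by (meson nat_le_linear)
    show ?thesis by (simp only: entry invalid False if_False)
  qed
qed

theorem mainTheorem13:
  fixes t a b c d e f u :: complex and M N :: nat and x y xb yb :: "nat list"
  assumes "t \<noteq> 0" "a \<noteq> 0" "b \<noteq> 0" "c \<noteq> 0" "d \<noteq> 0" "e \<noteq> 0" "f \<noteq> 0" "t \<noteq> 1"
    and "c*d + a*f = 0" and "t*c*d + b*e = 0"
    and "int N \<le> int M - 1"
    and "sorted_wrt (<) x" "length x = N" "set x \<subseteq> {1..M}"
    and "sorted_wrt (<) y" "length y = N + 1" "set y \<subseteq> {1..M}"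
    and "sorted_wrt (<) xb" "length xb = N" "set xb \<subseteq> {1..M}"
    and "sorted_wrt (<) yb" "length yb = N + 1" "set yb \<subseteq> {1..M}"
  shows "Bel t a b c d e f M u (particles y) (particles x) = Gf t a b c d e f M y x u
       \<and> Bel t a b c d e f M u (holes M xb) (holes M yb) = Hf t a b c d e f M yb xb u
       \<and> Cel t a b c d e f M u (particles x) (particles y) = Gbar t a b c d e f M y x u
       \<and> Cel t a b c d e f M u (holes M yb) (holes M xb) = Hbar t a b c d e f M yb xb u"
  unfolding Bel_def Cel_def Gf_def Gbar_def Hf_def Hbar_def particles_def Tpart_eq_monodromy_entry
  by (intro conjI monodromy_entry_eq_interlace)
     (use assms in \<open>auto simp: Lent_def conserving_weight_def holes_def\<close>)

end
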